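(* Let $G=(V=[n],w)$ be a connected loopless weighted graph with $\tilde h_G<h_G$. Then there is a fractional partition $(\rho,\eta)$ of $V$ with $\|\rho\|=\|\eta\|$ (so both equal $\mathrm{vol}(G)/2$) and $\tilde h(G;\rho,\eta)=\tilde h_G$.
   Context: A weighted graph is a pair $(V,w)$ with $V=[n]$ and $w:V\times V\to[0,1]$ symmetric; it is loopless if $w(v,v)=0$ for all $v$. Put $\mathrm{vol}(v)=\sum_{u}w(u,v)$, $\mathrm{vol}(G)=\sum_v\mathrm{vol}(v)$, and for $S\subseteq V$, $\mathrm{vol}(S)=\sum_{v\in S}\mathrm{vol}(v)$. $G$ is connected if $\sum_{u\in S,v\notin S}w(u,v)>0$ for every $\emptyset\ne S\subsetneq V$. The Cheeger constant is $h_G=\min_{\emptyset\ne S\subsetneq V}\frac{\sum_{u\in S,v\notin S}w(u,v)}{\min\{\mathrm{vol}(S),\mathrm{vol}(V\setminus S)\}}$. A fractional partition of $V$ is a pair $(\rho,\eta)$ of functions $V\to[0,1]$ with $\rho+\eta\equiv1$; $\|\rho\|=\sum_u\rho(u)\mathrm{vol}(u)$, $\|\eta\|=\sum_u\eta(u)\mathrm{vol}(u)$. When both are nonzero, $\tilde h(G;\rho,\eta)=\frac{\sum_{u,v}\rho(u)\eta(v)w(u,v)}{\min\{\|\rho\|,\|\eta\|\}}$, and $\tilde h_G=\inf\tilde h(G;\rho,\eta)$ over all such fractional partitions. *)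

theory Defs
  imports "HOL-Analysis.Analysis"
begin

text \<open>Weighted graph on vertex set V = [n], represented as {0..<n}; weights w restricted to V x V.\<close>

definition weighted_graph :: "nat \<Rightarrow> (nat \<Rightarrow> nat \<Rightarrow> real) \<Rightarrow> bool" where
  "weighted_graph n w \<longleftrightarrow>
     (\<forall>u\<in>{0..<n}. \<forall>v\<in>{0..<n}. 0 \<le> w u v \<and> w u v \<le> 1 \<and> w u v = w v u)"

definition loopless :: "nat \<Rightarrow> (nat \<Rightarrow> nat \<Rightarrow> real) \<Rightarrow> bool" where
  "loopless n w \<longleftrightarrow> (\<forall>v\<in>{0..<n}. w v v = 0)"

definition vol_v :: "nat \<Rightarrow> (nat \<Rightarrow> nat \<Rightarrow> real) \<Rightarrow> nat \<Rightarrow> real" where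
  "vol_v n w v = (\<Sum>u\<in>{0..<n}. w u v)"

definition vol_set :: "nat \<Rightarrow> (nat \<Rightarrow> nat \<Rightarrow> real) \<Rightarrow> nat set \<Rightarrow> real" where
  "vol_set n w S = (\<Sum>v\<in>S. vol_v n w v)"

definition vol_graph :: "nat \<Rightarrow> (nat \<Rightarrow> nat \<Rightarrow> real) \<Rightarrow> real" where
  "vol_graph n w = vol_set n w {0..<n}"

definition cut :: "nat \<Rightarrow> (nat \<Rightarrow> nat \<Rightarrow> real) \<Rightarrow> nat set \<Rightarrow> real" where
  "cut n w S = (\<Sum>u\<in>S. \<Sum>v\<in>{0..<n} - S. w u v)"

definition connected_wg :: "nat \<Rightarrow> (nat \<Rightarrow> nat \<Rightarrow> real) \<Rightarrow> bool" where
  "connected_wg n w \<longleftrightarrow> (\<forall>S. S \<noteq> {} \<and> S \<subset> {0..<n} \<longrightarrow> cut n w S > 0)"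

definition cheeger :: "nat \<Rightarrow> (nat \<Rightarrow> nat \<Rightarrow> real) \<Rightarrow> real" where
  "cheeger n w = Inf ((\<lambda>S. cut n w S / min (vol_set n w S) (vol_set n w ({0..<n} - S)))
                       ` {S. S \<noteq> {} \<and> S \<subset> {0..<n}})"

definition frac_partition :: "nat \<Rightarrow> (nat \<Rightarrow> real) \<Rightarrow> (nat \<Rightarrow> real) \<Rightarrow> bool" where
  "frac_partition n \<rho> \<eta> \<longleftrightarrow>
     (\<forall>u\<in>{0..<n}. 0 \<le> \<rho> u \<and> \<rho> u \<le> 1 \<and> 0 \<le> \<eta> u \<and> \<eta> u \<le> 1 \<and> \<rho> u + \<eta> u = 1)"

definition fnorm :: "nat \<Rightarrow> (nat \<Rightarrow> nat \<Rightarrow> real) \<Rightarrow> (nat \<Rightarrow> real) \<Rightarrow> real" where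
  "fnorm n w f = (\<Sum>u\<in>{0..<n}. f u * vol_v n w u)"

definition frac_cheeger_ratio :: "nat \<Rightarrow> (nat \<Rightarrow> nat \<Rightarrow> real) \<Rightarrow> (nat \<Rightarrow> real) \<Rightarrow> (nat \<Rightarrow> real) \<Rightarrow> real" where
  "frac_cheeger_ratio n w \<rho> \<eta> =
     (\<Sum>u\<in>{0..<n}. \<Sum>v\<in>{0..<n}. \<rho> u * \<eta> v * w u v) / min (fnorm n w \<rho>) (fnorm n w \<eta>)"

definition frac_cheeger :: "nat \<Rightarrow> (nat \<Rightarrow> nat \<Rightarrow> real) \<Rightarrow> real" where
  "frac_cheeger n w = Inf {frac_cheeger_ratio n w \<rho> \<eta> | \<rho> \<eta>.
       frac_partition n \<rho> \<eta> \<and> fnorm n w \<rho> \<noteq> 0 \<and> fnorm n w \<eta> \<noteq> 0}"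

end

theory Submission
  imports Defs
begin

text \<open>Identify a fractional partition with \<open>\<rho>\<close> (then \<open>\<eta> = 1 - \<rho>\<close>); its numerator is
  \<open>N(\<rho>) = \<Sum>\<^sub>u\<^sub>v \<rho>(u)(1 - \<rho>(v)) w(u,v)\<close>, which is affine in each coordinate since the graph is
  loopless, and \<open>N(1 - \<rho>) = N(\<rho>)\<close>. Given a partition of ratio \<open>r < h\<^sub>G\<close>, swap so that
  \<open>\<parallel>\<rho>\<parallel> \<le> vol(G)/2\<close>. Since \<open>N(\<rho>) \<ge> \<parallel>\<rho>\<parallel> - O(\<parallel>\<rho>\<parallel>\<^sup>2)\<close>, ratios near \<open>\<parallel>\<rho>\<parallel> = 0\<close> exceed
  \<open>r < h\<^sub>G \<le> 1\<close>, so the ratio attains a minimum \<open>m \<le> r\<close> on a compact slab \<open>\<epsilon> \<le> \<parallel>\<rho>\<parallel> \<le> vol(G)/2\<close>;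
  among the minimizers take one of largest \<open>\<parallel>\<rho>\<parallel>\<close>. If \<open>\<parallel>\<rho>\<parallel> < vol(G)/2\<close>, the nonnegative
  function \<open>N - m\<parallel>\<cdot>\<parallel>\<close> vanishes at \<open>\<rho>\<close> and is affine in each fractional coordinate, so its slope
  there is zero and that coordinate can be raised, contradicting maximality; hence \<open>\<rho>\<close> is the
  indicator of a set with ratio \<open>m < h\<^sub>G\<close>, which is absurd. So every ratio below \<open>h\<^sub>G\<close> is
  dominated by a balanced one, and the minimum of \<open>N\<close> over the compact set of balanced \<open>\<rho>\<close>
  realizes the fractional Cheeger constant.\<close>

locale connected_weighted_graph =
  fixes n :: nat and w :: "nat \<Rightarrow> nat \<Rightarrow> real"
  assumes weighted: "weighted_graph n w" and loopless: "loopless n w"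
    and connected: "connected_wg n w" and two_le_n: "2 \<le> n"
begin

definition frac_cut :: "(nat \<Rightarrow> real) \<Rightarrow> real" where
  "frac_cut \<rho> = (\<Sum>u\<in>{0..<n}. \<Sum>v\<in>{0..<n}. \<rho> u * (1 - \<rho> v) * w u v)"

text \<open>Functions are required to vanish outside \<open>V\<close>, so that the cube is compact in the
  product topology of \<^typ>\<open>nat \<Rightarrow> real\<close>.\<close>
definition unit_cube :: "(nat \<Rightarrow> real) set" where
  "unit_cube = {\<rho>. \<forall>u. \<rho> u \<in> (if u < n then {0..1} else {0})}"

lemma weight_nonneg: "u < n \<Longrightarrow> v < n \<Longrightarrow> 0 \<le> w u v"
  and weight_le_1: "u < n \<Longrightarrow> v < n \<Longrightarrow> w u v \<le> 1"
  and weight_sym: "u < n \<Longrightarrow> v < n \<Longrightarrow> w u v = w v u"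
  using weighted unfolding weighted_graph_def by auto

lemma weight_self: "u < n \<Longrightarrow> w u u = 0"
  using loopless unfolding loopless_def by auto

lemma vol_v_eq_row_sum: "u < n \<Longrightarrow> vol_v n w u = (\<Sum>v\<in>{0..<n}. w u v)"
  unfolding vol_v_def by (rule sum.cong) (auto simp: weight_sym)

lemma cut_singleton: "u < n \<Longrightarrow> cut n w {u} = vol_v n w u"
  by (simp add: cut_def vol_v_eq_row_sum sum.remove[of "{0..<n}" u] weight_self)

lemma vol_v_pos: "u < n \<Longrightarrow> 0 < vol_v n w u"
proof -
  assume u: "u < n"
  have "{u} \<noteq> {0..<n}"
  proof
    assume "{u} = {0..<n}"
    then have "card {u} = card {0..<n}" by simp
    then show False using two_le_n by simp
  qed
  then have "{u} \<subset> {0..<n}" using u by auto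
  then have "0 < cut n w {u}" using connected unfolding connected_wg_def by blast
  then show ?thesis using cut_singleton[OF u] by simp
qed

lemma vol_set_pos: "S \<noteq> {} \<Longrightarrow> S \<subseteq> {0..<n} \<Longrightarrow> 0 < vol_set n w S"
  unfolding vol_set_def using vol_v_pos by (intro sum_pos) (auto intro: finite_subset)

lemma vol_graph_pos: "0 < vol_graph n w"
  unfolding vol_graph_def using two_le_n by (intro vol_set_pos) auto

lemma fnorm_cong: "(\<And>u. u < n \<Longrightarrow> \<rho> u = \<sigma> u) \<Longrightarrow> fnorm n w \<rho> = fnorm n w \<sigma>"
  unfolding fnorm_def by (rule sum.cong) auto

lemma frac_cut_cong: "(\<And>u. u < n \<Longrightarrow> \<rho> u = \<sigma> u) \<Longrightarrow> frac_cut \<rho> = frac_cut \<sigma>"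
  unfolding frac_cut_def by (intro sum.cong) auto

lemma fnorm_complement: "fnorm n w (\<lambda>u. 1 - \<rho> u) = vol_graph n w - fnorm n w \<rho>"
  unfolding fnorm_def vol_graph_def vol_set_def by (simp add: left_diff_distrib sum_subtractf)

lemma frac_cut_complement: "frac_cut (\<lambda>u. 1 - \<rho> u) = frac_cut \<rho>"
  unfolding frac_cut_def
  by (subst sum.swap) (intro sum.cong refl, auto simp: weight_sym)

lemma fnorm_nonneg: "(\<And>u. u < n \<Longrightarrow> 0 \<le> \<rho> u) \<Longrightarrow> 0 \<le> fnorm n w \<rho>"
  unfolding fnorm_def using vol_v_pos by (intro sum_nonneg mult_nonneg_nonneg) (auto intro: less_imp_le)

lemma unit_cube_iff: "\<rho> \<in> unit_cube \<longleftrightarrow> (\<forall>u<n. 0 \<le> \<rho> u \<and> \<rho> u \<le> 1) \<and> (\<forall>u\<ge>n. \<rho> u = 0)"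
  unfolding unit_cube_def mem_Collect_eq
proof (intro iffI allI)
  assume "\<forall>u. \<rho> u \<in> (if u < n then {0..1} else {0})"
  then show "(\<forall>u<n. 0 \<le> \<rho> u \<and> \<rho> u \<le> 1) \<and> (\<forall>u\<ge>n. \<rho> u = 0)"
    by (metis atLeastAtMost_iff leD singletonD)
next
  fix u assume "(\<forall>u<n. 0 \<le> \<rho> u \<and> \<rho> u \<le> 1) \<and> (\<forall>u\<ge>n. \<rho> u = 0)"
  then show "\<rho> u \<in> (if u < n then {0..1} else {0})" by (simp add: not_less)
qed

lemma compact_unit_cube: "compact unit_cube"
proof -
  have "unit_cube = PiE UNIV (\<lambda>u. if u < n then {0..1} else {0})"
    unfolding unit_cube_def PiE_def Pi_def extensional_def by auto
  moreover have "compactin (product_topology (\<lambda>_. euclidean) UNIV) \<dots>"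
    by (subst compactin_PiE) auto
  ultimately show ?thesis by (simp add: euclidean_product_topology)
qed

lemma continuous_on_fnorm: "continuous_on A (fnorm n w)"
  unfolding fnorm_def
  by (intro continuous_intros continuous_on_product_then_coordinatewise[OF continuous_on_id])

lemma continuous_on_frac_cut: "continuous_on A frac_cut"
  unfolding frac_cut_def
  by (intro continuous_intros continuous_on_product_then_coordinatewise[OF continuous_on_id])

lemma fnorm_update: "u < n \<Longrightarrow> fnorm n w (\<rho>(u := \<rho> u + t)) = fnorm n w \<rho> + t * vol_v n w u"
  unfolding fnorm_def by (simp add: sum.If_cases algebra_simps sum.remove[of "{0..<n}" u])

lemma frac_cut_update:
  assumes u: "u < n"
  shows "frac_cut (\<rho>(u := \<rho> u + t)) = frac_cut \<rho> + t * (\<Sum>v\<in>{0..<n}. (1 - 2 * \<rho> v) * w u v)"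
proof -
  let ?V = "{0..<n}"
  have entry: "(\<rho>(u := \<rho> u + t)) a * (1 - (\<rho>(u := \<rho> u + t)) b) * w a b
      = \<rho> a * (1 - \<rho> b) * w a b + ((if a = u then t * (1 - \<rho> b) * w u b else 0)
        - (if b = u then t * \<rho> a * w u a else 0))" if "a < n" "b < n" for a b
    using that u by (auto simp: algebra_simps weight_self weight_sym)
  have row: "(\<Sum>a\<in>?V. \<Sum>b\<in>?V. if a = u then g b else 0) = sum g ?V" for g :: "nat \<Rightarrow> real"
    using u by (subst sum.swap) simp
  have "frac_cut (\<rho>(u := \<rho> u + t)) = (\<Sum>a\<in>?V. \<Sum>b\<in>?V. \<rho> a * (1 - \<rho> b) * w a b
      + ((if a = u then t * (1 - \<rho> b) * w u b else 0) - (if b = u then t * \<rho> a * w u a else 0)))"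
    unfolding frac_cut_def by (intro sum.cong refl entry) auto
  also have "\<dots> = frac_cut \<rho> + ((\<Sum>b\<in>?V. t * (1 - \<rho> b) * w u b) - (\<Sum>a\<in>?V. t * \<rho> a * w u a))"
    unfolding frac_cut_def sum.distrib sum_subtractf using u row by simp
  also have "\<dots> = frac_cut \<rho> + t * (\<Sum>v\<in>?V. (1 - 2 * \<rho> v) * w u v)"
    by (simp add: sum_distrib_left algebra_simps sum_subtractf sum.distrib)
  finally show ?thesis .
qed

definition min_vol :: real where
  "min_vol = Min (vol_v n w ` {0..<n})"

lemma min_vol_pos: "0 < min_vol"
  unfolding min_vol_def using two_le_n vol_v_pos by (subst Min_gr_iff) auto

lemma min_vol_le: "u < n \<Longrightarrow> min_vol \<le> vol_v n w u"
  unfolding min_vol_def by (rule Min_le) auto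

lemma frac_cut_lower_bound:
  assumes "\<rho> \<in> unit_cube"
  shows "fnorm n w \<rho> - (fnorm n w \<rho> / min_vol)\<^sup>2 \<le> frac_cut \<rho>"
proof -
  let ?V = "{0..<n}"
  let ?s = "\<Sum>u\<in>?V. \<rho> u"
  have \<rho>01: "0 \<le> \<rho> u" "\<rho> u \<le> 1" if "u < n" for u
    using assms that unfolding unit_cube_iff by auto
  have "frac_cut \<rho> = fnorm n w \<rho> - (\<Sum>u\<in>?V. \<Sum>v\<in>?V. \<rho> u * \<rho> v * w u v)"
    unfolding frac_cut_def fnorm_def
    by (simp add: algebra_simps sum_subtractf sum_distrib_left vol_v_eq_row_sum)
  moreover have "(\<Sum>u\<in>?V. \<Sum>v\<in>?V. \<rho> u * \<rho> v * w u v) \<le> (\<Sum>u\<in>?V. \<Sum>v\<in>?V. \<rho> u * \<rho> v)"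
    using \<rho>01 weight_le_1 by (intro sum_mono) (simp add: mult_left_le)
  moreover have "(\<Sum>u\<in>?V. \<Sum>v\<in>?V. \<rho> u * \<rho> v) = ?s\<^sup>2"
    by (simp add: power2_eq_square sum_product)
  moreover have "?s\<^sup>2 \<le> (fnorm n w \<rho> / min_vol)\<^sup>2"
  proof (rule power_mono)
    have "min_vol * ?s \<le> fnorm n w \<rho>"
      unfolding fnorm_def sum_distrib_left
      using \<rho>01 min_vol_le by (intro sum_mono) (simp add: mult.commute mult_left_mono)
    then show "?s \<le> fnorm n w \<rho> / min_vol"
      using min_vol_pos by (simp add: field_simps)
  qed (use \<rho>01 in \<open>auto intro: sum_nonneg\<close>)
  ultimately show ?thesis by linarith
qed

lemma frac_cut_gt_near_zero:
  assumes "r < 1" "\<rho> \<in> unit_cube" "0 < fnorm n w \<rho>"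
    and "fnorm n w \<rho> \<le> (1 - r) * min_vol\<^sup>2 / 2"
  shows "r * fnorm n w \<rho> < frac_cut \<rho>"
proof -
  let ?f = "fnorm n w \<rho>"
  have "(?f / min_vol)\<^sup>2 = ?f * (?f / min_vol\<^sup>2)" by (simp add: power2_eq_square)
  also have "\<dots> \<le> ?f * ((1 - r) / 2)"
    using assms min_vol_pos by (intro mult_left_mono) (auto simp: field_simps)
  also have "\<dots> < ?f * (1 - r)" using assms by (intro mult_strict_left_mono) auto
  finally show ?thesis using frac_cut_lower_bound[OF assms(2)] by (simp add: algebra_simps)
qed

lemma cheeger_le:
  assumes "S \<noteq> {}" "S \<subset> {0..<n}"
  shows "cheeger n w \<le> cut n w S / min (vol_set n w S) (vol_set n w ({0..<n} - S))"
  unfolding cheeger_def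
proof (rule cInf_lower)
  have "finite {S. S \<noteq> {} \<and> S \<subset> {0..<n}}"
    by (rule finite_subset[of _ "Pow {0..<n}"]) auto
  then show "bdd_below ((\<lambda>S. cut n w S / min (vol_set n w S) (vol_set n w ({0..<n} - S)))
      ` {S. S \<noteq> {} \<and> S \<subset> {0..<n}})"
    by (intro bdd_below_finite finite_imageI)
qed (use assms in auto)

lemma cheeger_le_1: "cheeger n w \<le> 1"
proof -
  let ?V = "{0..<n}"
  have "0 \<in> ?V" "1 \<in> ?V - {0}" using two_le_n by simp_all
  then have S: "{0} \<subset> ?V" by blast
  have "cut n w {0} = (\<Sum>v\<in>?V - {0}. w 0 v)" unfolding cut_def by simp
  also have "\<dots> \<le> vol_set n w (?V - {0})"
    unfolding vol_set_def vol_v_def using weight_nonneg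
    by (intro sum_mono member_le_sum) auto
  finally have "cut n w {0} \<le> min (vol_set n w {0}) (vol_set n w (?V - {0}))"
    using cut_singleton[of 0] two_le_n by (simp add: vol_set_def)
  moreover have "0 < min (vol_set n w {0}) (vol_set n w (?V - {0}))"
    using S by (auto intro!: vol_set_pos)
  ultimately have "cut n w {0} / min (vol_set n w {0}) (vol_set n w (?V - {0})) \<le> 1"
    by simp
  then show ?thesis
    using cheeger_le[of "{0}"] S by simp
qed

lemma fnorm_indicator:
  assumes "\<And>u. u < n \<Longrightarrow> \<rho> u = (if u \<in> S then 1 else 0)" "S \<subseteq> {0..<n}"
  shows "fnorm n w \<rho> = vol_set n w S"
proof -
  have "fnorm n w \<rho> = (\<Sum>u\<in>{0..<n}. if u \<in> S then vol_v n w u else 0)"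
    unfolding fnorm_def using assms(1) by (intro sum.cong) auto
  also have "\<dots> = vol_set n w S"
    unfolding vol_set_def using assms(2) by (simp add: sum.If_cases inf.absorb2)
  finally show ?thesis .
qed

lemma frac_cut_indicator:
  assumes "\<And>u. u < n \<Longrightarrow> \<rho> u = (if u \<in> S then 1 else 0)" "S \<subseteq> {0..<n}"
  shows "frac_cut \<rho> = cut n w S"
proof -
  have "frac_cut \<rho> = (\<Sum>u\<in>{0..<n}. if u \<in> S then (\<Sum>v\<in>{0..<n}. if v \<in> S then 0 else w u v) else 0)"
    unfolding frac_cut_def using assms(1) by (intro sum.cong refl) (auto intro!: sum.cong)
  also have "\<dots> = cut n w S"
    unfolding cut_def using assms(2) by (simp add: sum.If_cases inf.absorb2 Diff_eq)
  finally show ?thesis .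
qed

lemma unit_cube_update: "\<rho> \<in> unit_cube \<Longrightarrow> u < n \<Longrightarrow> 0 \<le> x \<Longrightarrow> x \<le> 1 \<Longrightarrow> \<rho>(u := x) \<in> unit_cube"
  unfolding unit_cube_iff by auto

lemma cheeger_le_integral_ratio:
  assumes "\<rho> \<in> unit_cube" "\<And>u. u < n \<Longrightarrow> \<rho> u = 0 \<or> \<rho> u = 1"
    and "0 < fnorm n w \<rho>" "fnorm n w \<rho> \<le> vol_graph n w / 2"
  shows "cheeger n w \<le> frac_cut \<rho> / fnorm n w \<rho>"
proof -
  define S where "S = {u. u < n \<and> \<rho> u = 1}"
  have SV: "S \<subseteq> {0..<n}" unfolding S_def by auto
  have ind: "\<And>u. u < n \<Longrightarrow> \<rho> u = (if u \<in> S then 1 else 0)"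
    using assms(2) unfolding S_def by auto
  have volS: "vol_set n w S = fnorm n w \<rho>" using fnorm_indicator[OF ind SV] ..
  have "vol_set n w ({0..<n} - S) = vol_graph n w - vol_set n w S"
    unfolding vol_graph_def vol_set_def using SV by (simp add: sum_diff)
  then have "min (vol_set n w S) (vol_set n w ({0..<n} - S)) = fnorm n w \<rho>"
    using volS assms(4) by simp
  moreover have "S \<noteq> {}" using volS assms(3) by (auto simp: vol_set_def)
  moreover have "S \<noteq> {0..<n}"
    using volS assms(3,4) unfolding vol_graph_def by auto
  ultimately show ?thesis
    using cheeger_le[of S] SV frac_cut_indicator[OF ind SV] by auto
qed

lemma frac_cut_minus_fnorm_update:
  assumes "u < n"
  shows "frac_cut (\<rho>(u := \<rho> u + s)) - m * fnorm n w (\<rho>(u := \<rho> u + s))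
    = frac_cut \<rho> - m * fnorm n w \<rho> + s * ((\<Sum>v\<in>{0..<n}. (1 - 2 * \<rho> v) * w u v) - m * vol_v n w u)"
  unfolding frac_cut_update[OF assms] fnorm_update[OF assms] by (simp add: algebra_simps)

lemma fractional_maximizer_is_integral:
  assumes above: "\<And>\<sigma>. \<sigma> \<in> unit_cube \<Longrightarrow> a \<le> fnorm n w \<sigma> \<Longrightarrow> fnorm n w \<sigma> \<le> b \<Longrightarrow>
      m * fnorm n w \<sigma> \<le> frac_cut \<sigma>"
    and \<rho>: "\<rho> \<in> unit_cube" "a < fnorm n w \<rho>" "fnorm n w \<rho> < b" "frac_cut \<rho> = m * fnorm n w \<rho>"
    and maximal: "\<And>\<sigma>. \<sigma> \<in> unit_cube \<Longrightarrow> a \<le> fnorm n w \<sigma> \<Longrightarrow> fnorm n w \<sigma> \<le> b \<Longrightarrow>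
      frac_cut \<sigma> = m * fnorm n w \<sigma> \<Longrightarrow> fnorm n w \<sigma> \<le> fnorm n w \<rho>"
    and u: "u < n"
  shows "\<rho> u = 0 \<or> \<rho> u = 1"
proof (rule ccontr)
  assume "\<not> (\<rho> u = 0 \<or> \<rho> u = 1)"
  then have frac: "0 < \<rho> u" "\<rho> u < 1" using \<rho>(1) u unfolding unit_cube_iff by force+
  let ?vu = "vol_v n w u" and ?f = "fnorm n w \<rho>"
  define d where "d = (\<Sum>v\<in>{0..<n}. (1 - 2 * \<rho> v) * w u v) - m * ?vu"
  define t where "t = min (min (\<rho> u) (1 - \<rho> u)) (min ((b - ?f) / ?vu) ((?f - a) / ?vu))"
  define \<sigma> where "\<sigma> s = \<rho>(u := \<rho> u + s)" for s
  have vu: "0 < ?vu" using vol_v_pos[OF u] .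
  have t: "0 < t" "t \<le> \<rho> u" "t \<le> 1 - \<rho> u" "t * ?vu \<le> b - ?f" "t * ?vu \<le> ?f - a"
    using frac \<rho> vu by (auto simp: t_def pos_le_divide_eq[symmetric])
  have fnorm_\<sigma>: "fnorm n w (\<sigma> s) = ?f + s * ?vu" for s
    unfolding \<sigma>_def by (rule fnorm_update[OF u])
  have excess_\<sigma>: "frac_cut (\<sigma> s) - m * fnorm n w (\<sigma> s) = s * d" for s
    unfolding \<sigma>_def d_def frac_cut_minus_fnorm_update[OF u] using \<rho>(4) by simp
  have \<sigma>_slab: "\<sigma> s \<in> unit_cube" "a \<le> fnorm n w (\<sigma> s)" "fnorm n w (\<sigma> s) \<le> b" if "\<bar>s\<bar> \<le> t" for s
  proof -
    show "\<sigma> s \<in> unit_cube"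
      unfolding \<sigma>_def using that t by (intro unit_cube_update[OF \<rho>(1) u]) auto
    have "\<bar>s * ?vu\<bar> \<le> t * ?vu" using that vu by (simp add: abs_mult mult_right_mono)
    then show "a \<le> fnorm n w (\<sigma> s)" "fnorm n w (\<sigma> s) \<le> b"
      unfolding fnorm_\<sigma> using t by (auto simp: abs_le_iff)
  qed
  have "0 \<le> s * d" if "\<bar>s\<bar> \<le> t" for s
    using above[OF \<sigma>_slab[OF that]] excess_\<sigma>[of s] by simp
  from this[of t] this[of "-t"] t(1) have "d = 0"
    by (simp add: zero_le_mult_iff mult_le_0_iff)
  then have "frac_cut (\<sigma> t) = m * fnorm n w (\<sigma> t)" using excess_\<sigma>[of t] by simp
  then have "fnorm n w (\<sigma> t) \<le> ?f"
    using maximal \<sigma>_slab[of t] t(1) by simp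
  moreover have "0 < t * ?vu" using t(1) vu by simp
  ultimately show False unfolding fnorm_\<sigma> by simp
qed

lemma exists_maximal_ratio_minimizer:
  assumes "0 < a" "\<rho>0 \<in> unit_cube" "a \<le> fnorm n w \<rho>0" "fnorm n w \<rho>0 \<le> b"
  obtains m \<rho> where "m \<le> frac_cut \<rho>0 / fnorm n w \<rho>0"
    and "\<And>\<sigma>. \<sigma> \<in> unit_cube \<Longrightarrow> a \<le> fnorm n w \<sigma> \<Longrightarrow> fnorm n w \<sigma> \<le> b \<Longrightarrow>
      m * fnorm n w \<sigma> \<le> frac_cut \<sigma>"
    and "\<rho> \<in> unit_cube" "a \<le> fnorm n w \<rho>" "fnorm n w \<rho> \<le> b" "frac_cut \<rho> = m * fnorm n w \<rho>"
    and "\<And>\<sigma>. \<sigma> \<in> unit_cube \<Longrightarrow> a \<le> fnorm n w \<sigma> \<Longrightarrow> fnorm n w \<sigma> \<le> b \<Longrightarrow>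
      frac_cut \<sigma> = m * fnorm n w \<sigma> \<Longrightarrow> fnorm n w \<sigma> \<le> fnorm n w \<rho>"
proof -
  define K where "K = unit_cube \<inter> {\<sigma>. a \<le> fnorm n w \<sigma>} \<inter> {\<sigma>. fnorm n w \<sigma> \<le> b}"
  have K: "compact K"
    unfolding K_def
    by (intro compact_Int_closed compact_unit_cube closed_Collect_le continuous_on_fnorm
        continuous_on_const)
  have \<rho>0K: "\<rho>0 \<in> K" unfolding K_def using assms by simp
  have K_pos: "0 < fnorm n w \<sigma>" if "\<sigma> \<in> K" for \<sigma>
    using that assms(1) unfolding K_def by auto
  have "continuous_on K (\<lambda>\<sigma>. frac_cut \<sigma> / fnorm n w \<sigma>)"
    using K_pos by (intro continuous_on_divide continuous_on_frac_cut continuous_on_fnorm) force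
  then obtain \<rho>1 where \<rho>1: "\<rho>1 \<in> K" and \<rho>1_min: "\<And>\<sigma>. \<sigma> \<in> K \<Longrightarrow>
      frac_cut \<rho>1 / fnorm n w \<rho>1 \<le> frac_cut \<sigma> / fnorm n w \<sigma>"
    using continuous_attains_inf[OF K] \<rho>0K by blast
  define m where "m = frac_cut \<rho>1 / fnorm n w \<rho>1"
  have above: "m * fnorm n w \<sigma> \<le> frac_cut \<sigma>" if "\<sigma> \<in> K" for \<sigma>
    using \<rho>1_min[OF that] K_pos[OF that] unfolding m_def by (simp add: pos_le_divide_eq)
  define Z where "Z = K \<inter> {\<sigma>. frac_cut \<sigma> = m * fnorm n w \<sigma>}"
  have "compact Z"
    unfolding Z_def
    by (intro compact_Int_closed K closed_Collect_eq continuous_on_frac_cut continuous_intros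
        continuous_on_fnorm)
  moreover have "\<rho>1 \<in> Z"
    using \<rho>1 K_pos[OF \<rho>1] unfolding Z_def m_def by simp
  ultimately obtain \<rho> where \<rho>: "\<rho> \<in> Z"
    and \<rho>_max: "\<And>\<sigma>. \<sigma> \<in> Z \<Longrightarrow> fnorm n w \<sigma> \<le> fnorm n w \<rho>"
    by (metis continuous_attains_sup continuous_on_fnorm empty_iff)
  show ?thesis
    using that[of m \<rho>] \<rho>1_min[OF \<rho>0K] above \<rho> \<rho>_max unfolding m_def[symmetric] K_def Z_def
    by auto
qed

lemma exists_balanced_le_ratio:
  assumes \<rho>0: "\<rho>0 \<in> unit_cube" "0 < fnorm n w \<rho>0" "fnorm n w \<rho>0 \<le> vol_graph n w / 2"
    and lt: "frac_cut \<rho>0 / fnorm n w \<rho>0 < cheeger n w"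
  shows "\<exists>\<sigma>\<in>unit_cube. fnorm n w \<sigma> = vol_graph n w / 2
    \<and> frac_cut \<sigma> / (vol_graph n w / 2) \<le> frac_cut \<rho>0 / fnorm n w \<rho>0"
proof -
  define half where "half = vol_graph n w / 2"
  have half_pos: "0 < half" unfolding half_def using vol_graph_pos by simp
  define r where "r = frac_cut \<rho>0 / fnorm n w \<rho>0"
  define \<epsilon> where "\<epsilon> = (1 - r) * min_vol\<^sup>2 / 2"
  have r1: "r < 1" using lt cheeger_le_1 unfolding r_def by linarith
  have \<epsilon>: "0 < \<epsilon>" using r1 min_vol_pos unfolding \<epsilon>_def by simp
  have near_zero: "r * fnorm n w \<sigma> < frac_cut \<sigma>"
    if "\<sigma> \<in> unit_cube" "0 < fnorm n w \<sigma>" "fnorm n w \<sigma> \<le> \<epsilon>" for \<sigma>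
    using frac_cut_gt_near_zero[OF r1 that(1,2)] that(3) unfolding \<epsilon>_def by blast
  have "\<epsilon> < fnorm n w \<rho>0"
    using near_zero[OF \<rho>0(1,2)] \<rho>0(2) unfolding r_def by force
  then obtain m \<rho> where mr: "m \<le> r"
    and above: "\<And>\<sigma>. \<sigma> \<in> unit_cube \<Longrightarrow> \<epsilon> \<le> fnorm n w \<sigma> \<Longrightarrow> fnorm n w \<sigma> \<le> half \<Longrightarrow>
      m * fnorm n w \<sigma> \<le> frac_cut \<sigma>"
    and \<rho>: "\<rho> \<in> unit_cube" "\<epsilon> \<le> fnorm n w \<rho>" "fnorm n w \<rho> \<le> half"
      "frac_cut \<rho> = m * fnorm n w \<rho>"
    and \<rho>_max: "\<And>\<sigma>. \<sigma> \<in> unit_cube \<Longrightarrow> \<epsilon> \<le> fnorm n w \<sigma> \<Longrightarrow> fnorm n w \<sigma> \<le> half \<Longrightarrow>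
      frac_cut \<sigma> = m * fnorm n w \<sigma> \<Longrightarrow> fnorm n w \<sigma> \<le> fnorm n w \<rho>"
    using exists_maximal_ratio_minimizer[OF \<epsilon> \<rho>0(1) _ \<rho>0(3)[folded half_def]]
    unfolding r_def by (metis less_imp_le)
  show ?thesis
  proof (cases "fnorm n w \<rho> = half")
    case True
    then have "frac_cut \<rho> / half = m"
      using \<rho>(4) half_pos by simp
    then show ?thesis
      using \<rho>(1) True mr unfolding half_def r_def by auto
  next
    case False
    have "\<epsilon> < fnorm n w \<rho>"
    proof (rule ccontr)
      assume "\<not> \<epsilon> < fnorm n w \<rho>"
      then have "r * fnorm n w \<rho> < m * fnorm n w \<rho>"
        using near_zero[OF \<rho>(1)] \<rho>(2,4) \<epsilon> by simp
      then show False using mr \<rho>(2) \<epsilon> by (smt (verit) mult_right_mono)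
    qed
    moreover have "fnorm n w \<rho> < half" using False \<rho>(3) by simp
    ultimately have "\<rho> u = 0 \<or> \<rho> u = 1" if "u < n" for u
      using fractional_maximizer_is_integral[OF above \<rho>(1) _ _ \<rho>(4) \<rho>_max that] by blast
    then have "cheeger n w \<le> m"
      using cheeger_le_integral_ratio[OF \<rho>(1)] \<rho>(2,3,4) \<epsilon>
      unfolding half_def by force
    then show ?thesis using mr lt unfolding r_def by simp
  qed
qed

lemma frac_partition_ratio_in_cube:
  assumes fp: "frac_partition n \<rho> \<eta>" and nz: "fnorm n w \<rho> \<noteq> 0" "fnorm n w \<eta> \<noteq> 0"
  shows "\<exists>\<sigma>\<in>unit_cube. 0 < fnorm n w \<sigma> \<and> fnorm n w \<sigma> \<le> vol_graph n w / 2
    \<and> frac_cheeger_ratio n w \<rho> \<eta> = frac_cut \<sigma> / fnorm n w \<sigma>"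
proof -
  have \<rho>\<eta>: "0 \<le> \<rho> u" "\<rho> u \<le> 1" "\<eta> u = 1 - \<rho> u" if "u < n" for u
    using fp that unfolding frac_partition_def by force+
  define \<rho>' where "\<rho>' = (\<lambda>u. if u < n then \<rho> u else 0)"
  define \<eta>' where "\<eta>' = (\<lambda>u. if u < n then \<eta> u else 0)"
  have cube: "\<rho>' \<in> unit_cube" "\<eta>' \<in> unit_cube"
    unfolding unit_cube_iff \<rho>'_def \<eta>'_def using \<rho>\<eta> by auto
  have fnorm: "fnorm n w \<rho>' = fnorm n w \<rho>" "fnorm n w \<eta>' = fnorm n w \<eta>"
    by (auto intro: fnorm_cong simp: \<rho>'_def \<eta>'_def)
  have "fnorm n w \<eta>' = fnorm n w (\<lambda>u. 1 - \<rho>' u)"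
    by (rule fnorm_cong) (simp add: \<rho>'_def \<eta>'_def \<rho>\<eta>)
  then have sum_fnorm: "fnorm n w \<rho>' + fnorm n w \<eta>' = vol_graph n w"
    by (simp add: fnorm_complement)
  have "frac_cut \<eta>' = frac_cut (\<lambda>u. 1 - \<rho>' u)"
    by (rule frac_cut_cong) (simp add: \<rho>'_def \<eta>'_def \<rho>\<eta>)
  then have cut_eq: "frac_cut \<eta>' = frac_cut \<rho>'" by (simp add: frac_cut_complement)
  have ratio: "frac_cheeger_ratio n w \<rho> \<eta> = frac_cut \<rho>' / min (fnorm n w \<rho>') (fnorm n w \<eta>')"
    unfolding frac_cheeger_ratio_def frac_cut_def fnorm
    by (intro arg_cong2[where f = "(/)"] sum.cong refl) (simp add: \<rho>'_def \<rho>\<eta>)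
  define \<sigma> where "\<sigma> = (if fnorm n w \<rho>' \<le> fnorm n w \<eta>' then \<rho>' else \<eta>')"
  have "0 \<le> fnorm n w \<rho>" "0 \<le> fnorm n w \<eta>"
    using \<rho>\<eta> by (auto intro!: fnorm_nonneg)
  then show ?thesis
    using cube nz sum_fnorm ratio cut_eq fnorm
    by (intro bexI[of _ \<sigma>]) (auto simp: \<sigma>_def min_def)
qed

lemma balanced_frac_partition:
  assumes "\<sigma> \<in> unit_cube" "fnorm n w \<sigma> = vol_graph n w / 2"
  shows "frac_partition n \<sigma> (\<lambda>u. 1 - \<sigma> u)"
    and "fnorm n w (\<lambda>u. 1 - \<sigma> u) = vol_graph n w / 2"
    and "frac_cheeger_ratio n w \<sigma> (\<lambda>u. 1 - \<sigma> u) = frac_cut \<sigma> / (vol_graph n w / 2)"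
proof -
  show "frac_partition n \<sigma> (\<lambda>u. 1 - \<sigma> u)"
    using assms(1) unfolding frac_partition_def unit_cube_iff by auto
  show complement: "fnorm n w (\<lambda>u. 1 - \<sigma> u) = vol_graph n w / 2"
    using assms(2) by (simp add: fnorm_complement)
  show "frac_cheeger_ratio n w \<sigma> (\<lambda>u. 1 - \<sigma> u) = frac_cut \<sigma> / (vol_graph n w / 2)"
    unfolding frac_cheeger_ratio_def frac_cut_def complement assms(2) by simp
qed

lemma exists_optimal_balanced_partition:
  assumes lt: "frac_cheeger n w < cheeger n w"
  shows "\<exists>\<rho> \<eta>. frac_partition n \<rho> \<eta> \<and> fnorm n w \<rho> = fnorm n w \<eta> \<and> fnorm n w \<rho> \<noteq> 0
    \<and> frac_cheeger_ratio n w \<rho> \<eta> = frac_cheeger n w"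
proof -
  define half where "half = vol_graph n w / 2"
  define B where "B = unit_cube \<inter> {\<sigma>. fnorm n w \<sigma> = half}"
  define F where "F = {frac_cheeger_ratio n w \<rho> \<eta> | \<rho> \<eta>.
    frac_partition n \<rho> \<eta> \<and> fnorm n w \<rho> \<noteq> 0 \<and> fnorm n w \<eta> \<noteq> 0}"
  have half: "0 < half" unfolding half_def using vol_graph_pos by simp
  have "compact B"
    unfolding B_def
    by (intro compact_Int_closed compact_unit_cube closed_Collect_eq continuous_on_fnorm
        continuous_on_const)
  moreover have "fnorm n w (\<lambda>u. if u < n then 1 / 2 else 0) = half"
    unfolding fnorm_def half_def vol_graph_def vol_set_def by (simp add: sum_divide_distrib)
  then have "(\<lambda>u. if u < n then 1 / 2 else 0) \<in> B"
    unfolding B_def by (simp add: unit_cube_iff)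
  ultimately obtain \<sigma> where \<sigma>: "\<sigma> \<in> B" and \<sigma>_min: "\<And>\<tau>. \<tau> \<in> B \<Longrightarrow> frac_cut \<sigma> \<le> frac_cut \<tau>"
    by (metis continuous_attains_inf continuous_on_frac_cut empty_iff)
  define m where "m = frac_cut \<sigma> / half"
  have \<sigma>_partition: "frac_partition n \<sigma> (\<lambda>u. 1 - \<sigma> u)" "fnorm n w (\<lambda>u. 1 - \<sigma> u) = half"
    "fnorm n w \<sigma> = half" "frac_cheeger_ratio n w \<sigma> (\<lambda>u. 1 - \<sigma> u) = m"
    using \<sigma> balanced_frac_partition[of \<sigma>] unfolding B_def half_def m_def by auto
  then have mF: "m \<in> F" unfolding F_def using half by fastforce
  have m_le: "m \<le> y" if yF: "y \<in> F" and y_lt: "y < cheeger n w" for y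
  proof -
    obtain \<rho> \<eta> where "frac_partition n \<rho> \<eta>" "fnorm n w \<rho> \<noteq> 0" "fnorm n w \<eta> \<noteq> 0"
      and y: "y = frac_cheeger_ratio n w \<rho> \<eta>"
      using yF unfolding F_def by blast
    then obtain \<rho>' where "\<rho>' \<in> unit_cube" "0 < fnorm n w \<rho>'" "fnorm n w \<rho>' \<le> vol_graph n w / 2"
      and y': "y = frac_cut \<rho>' / fnorm n w \<rho>'"
      using frac_partition_ratio_in_cube by metis
    then obtain \<tau> where "\<tau> \<in> B" "frac_cut \<tau> / half \<le> y"
      using exists_balanced_le_ratio[of \<rho>'] y_lt y' unfolding B_def half_def by auto
    then show ?thesis using \<sigma>_min half unfolding m_def by (meson divide_right_mono less_imp_le order_trans)
  qed
  obtain y where "y \<in> F" "y < cheeger n w"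
    using cInf_lessD[of F] mF lt unfolding frac_cheeger_def F_def by blast
  then have "m < cheeger n w" using m_le by fastforce
  then have "m \<le> y" if "y \<in> F" for y
    using m_le[OF that] by force
  then have "frac_cheeger n w = m"
    unfolding frac_cheeger_def F_def[symmetric] using mF by (intro cInf_eq_minimum)
  then show ?thesis using \<sigma>_partition half by (intro exI[of _ \<sigma>] exI[of _ "\<lambda>u. 1 - \<sigma> u"]) auto
qed

end

text \<open>Both constants are then infima of the empty set.\<close>
lemma cheeger_eq_frac_cheeger_if_less_two:
  assumes "loopless n w" "n < 2"
  shows "frac_cheeger n w = cheeger n w"
proof -
  have no_norm: "fnorm n w \<rho> = 0" for \<rho>
    using assms by (cases n) (auto simp: fnorm_def vol_v_def loopless_def)
  have no_cut: "{S. S \<noteq> {} \<and> S \<subset> {0..<n}} = {}"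
    using assms(2) by (auto simp: less_2_cases_iff)
  show ?thesis
    unfolding frac_cheeger_def cheeger_def no_cut by (simp add: no_norm)
qed

theorem mainTheorem11:
  fixes n :: nat and w :: "nat \<Rightarrow> nat \<Rightarrow> real"
  assumes "weighted_graph n w"
    and "loopless n w"
    and "connected_wg n w"
    and "frac_cheeger n w < cheeger n w"
  shows "\<exists>\<rho> \<eta>. frac_partition n \<rho> \<eta>
           \<and> fnorm n w \<rho> = fnorm n w \<eta>
           \<and> fnorm n w \<rho> \<noteq> 0
           \<and> frac_cheeger_ratio n w \<rho> \<eta> = frac_cheeger n w"
proof -
  have "2 \<le> n"
    using cheeger_eq_frac_cheeger_if_less_two[OF assms(2)] assms(4) by force
  then interpret connected_weighted_graph n w
    using assms by unfold_locales
  show ?thesis using exists_optimal_balanced_partition[OF assms(4)] .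
qed

end
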